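(* Let $G$ be a second countable locally compact Hausdorff groupoid with a fixed left Haar system $\lambda=\{\lambda^u\}_{u\in G^0}$, and let $(\Phi,\Psi)$ be a complementary pair of $N$-functions with $\Phi\in\Delta_2$. For $f\in C_c(G)$, the function $g:G^0\to\mathbb R$, $g(u)=\|f^u\|_\Phi$, where $f^u=f|_{G^u}$ and $\|\cdot\|_\Phi$ is the Orlicz norm on $L^\Phi(G^u)$, is continuous on $G^0$ with compact support.
   Context: $G^0$ is the unit space, $r(x)=xx^{-1}$, $d(x)=x^{-1}x$, $G^u=r^{-1}(u)$. The left Haar system consists of positive Radon measures $\lambda^u$ with support $G^u$ such that $u\mapsto\int f\,d\lambda^u$ is continuous for every $f\in C_c(G)$ and $\int f(xy)d\lambda^{d(x)}(y)=\int f(y)d\lambda^{r(x)}(y)$. An $N$-function is a continuous even convex $\Phi:\mathbb R\to[0,\infty)$ with $\Phi(x)=0$ iff $x=0$, $\Phi(x)/x\to0$ as $x\to0$, $\Phi(x)/x\to\infty$ as $x\to\infty$; complementary function $\Psi(y)=\sup_{x\ge0}(x|y|-\Phi(x))$. $\Phi\in\Delta_2$: there is $k>0$ with $\Phi(2x)\le k\Phi(x)$ for all $x\ge0$ ($G$ non-compact), resp. for all $x\ge x_0$ for some $x_0>0$ ($G$ compact). $L^\Phi(G^u)$ is the space of measurable $h$ on $G^u$ with $\int\Phi(\alpha|h|)d\lambda^u<\infty$ for some $\alpha>0$; its Orlicz norm is $\|h\|_\Phi=\sup\{\int_{G^u}|hk|\,d\lambda^u:\int_{G^u}\Psi(|k|)d\lambda^u\le1\}$.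 *)

theory Defs
  imports "HOL-Analysis.Analysis"
begin

text \<open>A topological groupoid whose underlying space is the whole type 'a.
  G2 is the set of composable pairs G2, gmult the partial multiplication
  (only meaningful on G2), ginv the inversion.\<close>

definition groupoid :: "('a \<times> 'a) set \<Rightarrow> ('a \<Rightarrow> 'a \<Rightarrow> 'a) \<Rightarrow> ('a \<Rightarrow> 'a) \<Rightarrow> bool" where
  "groupoid G2 gmult ginv \<longleftrightarrow>
     (\<forall>x y z. (x, y) \<in> G2 \<and> (y, z) \<in> G2 \<longrightarrow>
         (gmult x y, z) \<in> G2 \<and> (x, gmult y z) \<in> G2 \<and> gmult (gmult x y) z = gmult x (gmult y z)) \<and>
     (\<forall>x. ginv (ginv x) = x) \<and>
     (\<forall>x. (ginv x, x) \<in> G2) \<and>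
     (\<forall>x y. (x, y) \<in> G2 \<longrightarrow> gmult (ginv x) (gmult x y) = y \<and> gmult (gmult x y) (ginv y) = x)"

definition range_map :: "('a \<Rightarrow> 'a \<Rightarrow> 'a) \<Rightarrow> ('a \<Rightarrow> 'a) \<Rightarrow> 'a \<Rightarrow> 'a" where
  "range_map gmult ginv x = gmult x (ginv x)"

definition source_map :: "('a \<Rightarrow> 'a \<Rightarrow> 'a) \<Rightarrow> ('a \<Rightarrow> 'a) \<Rightarrow> 'a \<Rightarrow> 'a" where
  "source_map gmult ginv x = gmult (ginv x) x"

definition unit_space :: "('a \<Rightarrow> 'a \<Rightarrow> 'a) \<Rightarrow> ('a \<Rightarrow> 'a) \<Rightarrow> 'a set" where
  "unit_space gmult ginv = range (range_map gmult ginv)"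

text \<open>Second countable locally compact Hausdorff groupoid (second countability and
  the Hausdorff property come from the type classes in the statement).\<close>
definition lc_groupoid :: "('a::topological_space \<times> 'a) set \<Rightarrow> ('a \<Rightarrow> 'a \<Rightarrow> 'a) \<Rightarrow> ('a \<Rightarrow> 'a) \<Rightarrow> bool" where
  "lc_groupoid G2 gmult ginv \<longleftrightarrow>
     groupoid G2 gmult ginv \<and>
     locally_compact_space (euclidean :: 'a topology) \<and>
     continuous_on UNIV ginv \<and>
     continuous_on G2 (\<lambda>p. gmult (fst p) (snd p))"

definition Cc :: "('a::topological_space \<Rightarrow> real) set" where
  "Cc = {f. continuous_on UNIV f \<and> compact (closure {x. f x \<noteq> 0})}"

definition measure_support :: "'a::topological_space measure \<Rightarrow> 'a set" where
  "measure_support M = {x. \<forall>U. open U \<and> x \<in> U \<longrightarrow> emeasure M U > 0}"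

text \<open>Positive Radon measure on a second countable LCH space: a locally finite Borel measure
  (regularity is automatic in this setting).\<close>
definition radon_measure :: "'a::topological_space measure \<Rightarrow> bool" where
  "radon_measure M \<longleftrightarrow> sets M = sets borel \<and> (\<forall>K. compact K \<longrightarrow> emeasure M K < \<infinity>)"

definition left_haar_system ::
  "('a::topological_space \<times> 'a) set \<Rightarrow> ('a \<Rightarrow> 'a \<Rightarrow> 'a) \<Rightarrow> ('a \<Rightarrow> 'a) \<Rightarrow> ('a \<Rightarrow> 'a measure) \<Rightarrow> bool" where
  "left_haar_system G2 gmult ginv lam \<longleftrightarrow>
     (\<forall>u \<in> unit_space gmult ginv.
        radon_measure (lam u) \<and>
        measure_support (lam u) = range_map gmult ginv -` {u}) \<and>
     (\<forall>f \<in> Cc. continuous_on (unit_space gmult ginv) (\<lambda>u. integral\<^sup>L (lam u) f)) \<and>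
     (\<forall>f \<in> Cc. \<forall>x. (\<integral>y. f (gmult x y) \<partial>lam (source_map gmult ginv x))
                  = (\<integral>y. f y \<partial>lam (range_map gmult ginv x)))"

definition N_function :: "(real \<Rightarrow> real) \<Rightarrow> bool" where
  "N_function \<Phi> \<longleftrightarrow>
     continuous_on UNIV \<Phi> \<and> (\<forall>x. \<Phi> (- x) = \<Phi> x) \<and> convex_on UNIV \<Phi> \<and>
     (\<forall>x. \<Phi> x \<ge> 0) \<and> (\<forall>x. \<Phi> x = 0 \<longleftrightarrow> x = 0) \<and>
     ((\<lambda>x. \<Phi> x / x) \<longlongrightarrow> 0) (at 0) \<and>
     filterlim (\<lambda>x. \<Phi> x / x) at_top at_top"

definition complementary_function :: "(real \<Rightarrow> real) \<Rightarrow> real \<Rightarrow> real" where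
  "complementary_function \<Phi> y = (SUP x\<in>{0..}. x * \<bar>y\<bar> - \<Phi> x)"

definition Delta2 :: "bool \<Rightarrow> (real \<Rightarrow> real) \<Rightarrow> bool" where
  "Delta2 G_compact \<Phi> \<longleftrightarrow>
     (if G_compact then (\<exists>k>0. \<exists>x0>0. \<forall>x\<ge>x0. \<Phi> (2 * x) \<le> k * \<Phi> x)
      else (\<exists>k>0. \<forall>x\<ge>0. \<Phi> (2 * x) \<le> k * \<Phi> x))"

definition orlicz_norm :: "(real \<Rightarrow> real) \<Rightarrow> 'a measure \<Rightarrow> ('a \<Rightarrow> real) \<Rightarrow> ennreal" where
  "orlicz_norm \<Psi> M h =
     (SUP k \<in> {k \<in> borel_measurable M. (\<integral>\<^sup>+x. ennreal (\<Psi> \<bar>k x\<bar>) \<partial>M) \<le> 1}.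
        \<integral>\<^sup>+x. ennreal \<bar>h x * k x\<bar> \<partial>M)"

end

theory Submission
  imports Defs
begin

text \<open>The Orlicz norm of a bounded function \<open>h\<close> supported on a set of finite measure is
  squeezed between two families of explicit quantities. From above, Young's inequality gives
  Amemiya's bound \<open>\<parallel>h\<parallel>\<^sub>\<Phi> \<le> (1 + \<integral>\<Phi>(t|h|)) / t\<close> for every \<open>t > 0\<close>. From below, \<open>h\<close> is paired with
  the test function \<open>k = chord_slope \<Phi> \<eta> (t|h|)\<close>, a difference quotient of \<open>\<Phi>\<close> that almost
  attains equality in Young's inequality. Choosing \<open>t\<close> by the intermediate value theorem makes
  this lower bound exceed the upper one divided by \<open>1 + \<eta>\<close>, unless the modular \<open>\<integral>\<Phi>(t|h|)\<close> stays
  bounded, in which case the upper bound tends to 0. So the norm is at the same time an infimum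
  and a supremum of these quantities.

  On the fibres \<open>G\<^sup>u\<close> all of them are integrals against \<open>\<lambda>\<^sup>u\<close> of functions in \<open>C\<^sub>c(G)\<close>, hence
  continuous in \<open>u\<close> by the continuity of the Haar system, and so \<open>u \<mapsto> \<parallel>f\<^sup>u\<parallel>\<^sub>\<Phi>\<close> is both
  upper and lower semicontinuous. It vanishes outside the compact set \<open>r(supp f)\<close>.\<close>

section \<open>\<open>N\<close>-functions\<close>

lemma N_function_zero: "N_function \<Phi> \<Longrightarrow> \<Phi> 0 = 0"
  unfolding N_function_def by auto

lemma N_function_nonneg: "N_function \<Phi> \<Longrightarrow> 0 \<le> \<Phi> x"
  unfolding N_function_def by auto

lemma N_function_continuous: "N_function \<Phi> \<Longrightarrow> continuous_on UNIV \<Phi>"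
  unfolding N_function_def by auto

lemma N_function_convex: "N_function \<Phi> \<Longrightarrow> convex_on UNIV \<Phi>"
  unfolding N_function_def by auto

lemma N_function_scale:
  assumes "N_function \<Phi>" "0 \<le> c" "c \<le> 1"
  shows "\<Phi> (c * x) \<le> c * \<Phi> x"
  using convex_onD[OF N_function_convex[OF assms(1)], of c 0 x] assms
  by (simp add: N_function_zero)

lemma N_function_mono:
  assumes "N_function \<Phi>" "0 \<le> x" "x \<le> y"
  shows "\<Phi> x \<le> \<Phi> y"
proof (cases "y = 0")
  case False
  then have "\<Phi> ((x / y) * y) \<le> (x / y) * \<Phi> y"
    using assms by (intro N_function_scale) auto
  also have "\<dots> \<le> \<Phi> y"
    using assms False N_function_nonneg[OF assms(1), of y]
    by (intro mult_left_le_one_le) (auto simp: divide_le_eq_1)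
  finally show ?thesis using False by simp
qed (use assms in simp)

lemma young_inequality:
  assumes "N_function \<Phi>" "0 \<le> x"
  shows "x * \<bar>y\<bar> \<le> \<Phi> x + complementary_function \<Phi> y"
proof -
  have "eventually (\<lambda>x. \<bar>y\<bar> \<le> \<Phi> x / x) at_top"
    using assms(1) unfolding N_function_def filterlim_at_top by blast
  then obtain X where X: "\<And>x. X \<le> x \<Longrightarrow> \<bar>y\<bar> \<le> \<Phi> x / x"
    by (auto simp: eventually_at_top_linorder)
  have "x * \<bar>y\<bar> - \<Phi> x \<le> max X 1 * \<bar>y\<bar>" if "0 \<le> x" for x
  proof (cases "x \<le> max X 1")
    case True
    then show ?thesis
      using mult_right_mono[OF True, of "\<bar>y\<bar>"] N_function_nonneg[OF assms(1), of x] by simp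
  next
    case False
    then have "X \<le> x" "0 < x" by auto
    then have "x * \<bar>y\<bar> \<le> \<Phi> x"
      using X[of x] by (simp add: pos_le_divide_eq mult.commute)
    moreover have "0 \<le> max X 1 * \<bar>y\<bar>" by simp
    ultimately show ?thesis by linarith
  qed
  then have "bdd_above ((\<lambda>x. x * \<bar>y\<bar> - \<Phi> x) ` {0..})"
    by (intro bdd_aboveI2[where M = "max X 1 * \<bar>y\<bar>"]) auto
  then have "x * \<bar>y\<bar> - \<Phi> x \<le> complementary_function \<Phi> y"
    unfolding complementary_function_def using assms(2) by (intro cSUP_upper) auto
  then show ?thesis by simp
qed

lemma convex_on_secant_le_outside:
  fixes \<Phi> :: "real \<Rightarrow> real"
  assumes "convex_on UNIV \<Phi>" "s < s'" "x \<le> s \<or> s' \<le> x"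
  shows "\<Phi> s + (\<Phi> s' - \<Phi> s) / (s' - s) * (x - s) \<le> \<Phi> x"
  using assms(3)
proof
  assume "x \<le> s"
  show ?thesis
  proof (cases "x = s")
    case False
    then have "(\<Phi> x - \<Phi> s) / (x - s) \<le> (\<Phi> s - \<Phi> s') / (s - s')"
      using convex_on_slope_le[OF assms(1), of x s' s] \<open>x \<le> s\<close> assms(2) by auto
    then show ?thesis
      using \<open>x \<le> s\<close> False assms(2) by (simp add: field_simps)
  qed simp
next
  assume "s' \<le> x"
  show ?thesis
  proof (cases "x = s'")
    case False
    then have "(\<Phi> s - \<Phi> s') / (s - s') \<le> (\<Phi> s' - \<Phi> x) / (s' - x)"
      using convex_on_slope_le[OF assms(1), of s x s'] \<open>s' \<le> x\<close> assms(2) by auto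
    then show ?thesis
      using \<open>s' \<le> x\<close> False assms(2) by (simp add: field_simps)
  qed simp
qed

lemma isCont_N_function_quotient:
  assumes "N_function \<Phi>"
  shows "isCont (\<lambda>x. \<Phi> x / x) x"
proof (cases "x = 0")
  case True
  then show ?thesis
    using assms unfolding N_function_def isCont_def by simp
next
  case False
  have "isCont \<Phi> x"
    using N_function_continuous[OF assms] by (simp add: continuous_on_eq_continuous_at)
  then show ?thesis using False by (intro continuous_intros)
qed

text \<open>The difference quotient of \<open>\<Phi>\<close> over \<open>[s, (1 + \<eta>) s]\<close> stands in for the derivative
  of \<open>\<Phi>\<close>, which need not exist. At \<open>s = 0\<close> the division yields 0, which is also the
  limit there since \<open>\<Phi> x / x \<rightarrow> 0\<close>.\<close>

definition chord_slope :: "(real \<Rightarrow> real) \<Rightarrow> real \<Rightarrow> real \<Rightarrow> real" where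
  "chord_slope \<Phi> \<eta> s = (\<Phi> ((1 + \<eta>) * s) - \<Phi> s) / (\<eta> * s)"

lemma mult_chord_slope: "s * chord_slope \<Phi> \<eta> s = (\<Phi> ((1 + \<eta>) * s) - \<Phi> s) / \<eta>"
  unfolding chord_slope_def by (cases "s = 0") auto

lemma chord_slope_nonneg:
  assumes "N_function \<Phi>" "0 < \<eta>" "0 \<le> s"
  shows "0 \<le> chord_slope \<Phi> \<eta> s"
  unfolding chord_slope_def using assms N_function_mono[OF assms(1), of s "(1 + \<eta>) * s"]
  by (intro divide_nonneg_nonneg) (auto simp: algebra_simps)

lemma continuous_chord_slope:
  assumes "N_function \<Phi>" "0 < \<eta>"
  shows "continuous_on UNIV (chord_slope \<Phi> \<eta>)"
proof -
  define q where "q x = \<Phi> x / x" for x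
  have q: "isCont q x" for x
    unfolding q_def by (rule isCont_N_function_quotient[OF assms(1)])
  have "chord_slope \<Phi> \<eta> s = ((1 + \<eta>) * q ((1 + \<eta>) * s) - q s) / \<eta>" for s
  proof (cases "s = 0")
    case False
    then have "(1 + \<eta>) * s \<noteq> 0" "\<eta> \<noteq> 0" using assms(2) by auto
    then show ?thesis
      unfolding chord_slope_def q_def by (simp add: diff_divide_distrib mult.commute)
  qed (simp add: chord_slope_def q_def)
  moreover have "isCont (\<lambda>s. ((1 + \<eta>) * q ((1 + \<eta>) * s) - q s) / \<eta>) s" for s
    using assms(2) by (intro continuous_intros isCont_o2[OF _ q] q) auto
  ultimately show ?thesis
    by (simp add: continuous_on_eq_continuous_at)
qed

text \<open>Equality in Young's inequality, \<open>\<Psi> y = s y - \<Phi> s\<close>, holds for the chord slope up to the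
  factor \<open>1 + \<eta>\<close> on \<open>s\<close>.\<close>

lemma complementary_chord_slope_le:
  assumes "N_function \<Phi>" "0 < \<eta>" "0 \<le> s"
  shows "complementary_function \<Phi> (chord_slope \<Phi> \<eta> s)
           \<le> (1 + \<eta>) * s * chord_slope \<Phi> \<eta> s - \<Phi> s"
proof -
  let ?y = "chord_slope \<Phi> \<eta> s"
  have y: "0 \<le> ?y" by (rule chord_slope_nonneg[OF assms])
  have "x * ?y - \<Phi> x \<le> (1 + \<eta>) * s * ?y - \<Phi> s" if "0 \<le> x" for x
  proof (cases "s = 0")
    case True
    then show ?thesis using N_function_nonneg[OF assms(1), of x] N_function_zero[OF assms(1)]
      by (simp add: chord_slope_def)
  next
    case False
    define s' where "s' = (1 + \<eta>) * s"
    have ss': "s < s'" using False assms by (simp add: s'_def)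
    have slope: "?y = (\<Phi> s' - \<Phi> s) / (s' - s)"
      unfolding chord_slope_def s'_def by (simp add: algebra_simps)
    consider "x \<le> s \<or> s' \<le> x" | "s \<le> x" "x \<le> s'" by linarith
    then show ?thesis
    proof cases
      case 1
      have "\<Phi> s + ?y * (x - s) \<le> \<Phi> x"
        unfolding slope by (rule convex_on_secant_le_outside[OF N_function_convex[OF assms(1)] ss' 1])
      moreover have "s * ?y \<le> s' * ?y" using ss' y by (intro mult_right_mono) auto
      ultimately show ?thesis by (simp add: s'_def algebra_simps)
    next
      case 2
      have "x * ?y \<le> s' * ?y" using 2 y by (intro mult_right_mono)
      moreover have "\<Phi> s \<le> \<Phi> x" using N_function_mono[OF assms(1)] 2 assms(3) by simp
      ultimately show ?thesis by (simp add: s'_def)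
    qed
  qed
  then show ?thesis
    unfolding complementary_function_def using y by (intro cSUP_least) auto
qed

section \<open>Amemiya's formula\<close>

text \<open>Applied to the modular \<open>I t = \<integral>\<Phi>(t|h|)\<close>, the expression set equal to 1 bounds
  \<open>\<integral>\<Psi>(chord_slope \<Phi> \<eta> (t|h|))\<close> from above. It is at least \<open>\<eta> I t\<close> and tends to 0 at 0,
  so unless \<open>I\<close> stays below \<open>1/\<eta>\<close> the intermediate value theorem lets it reach 1.\<close>

lemma level_crossing_or_bounded:
  fixes I :: "real \<Rightarrow> real"
  assumes cont: "continuous_on {0..} I" and I0: "I 0 = 0"
    and nonneg: "\<And>t. 0 \<le> t \<Longrightarrow> 0 \<le> I t"
    and superlinear: "\<And>t. 0 \<le> t \<Longrightarrow> (1 + \<eta>) * I t \<le> I ((1 + \<eta>) * t)"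
    and \<eta>: "0 < \<eta>"
  shows "(\<exists>t>0. (1 + \<eta>) / \<eta> * (I ((1 + \<eta>) * t) - I t) - I t = 1) \<or> (\<forall>t>0. I t < 1 / \<eta>)"
proof (rule disjCI)
  assume "\<not> (\<forall>t>0. I t < 1 / \<eta>)"
  then obtain t1 where t1: "0 < t1" "1 / \<eta> \<le> I t1" by (auto simp: not_less)
  define G where "G t = (1 + \<eta>) / \<eta> * (I ((1 + \<eta>) * t) - I t) - I t" for t
  have "\<eta> * I t \<le> G t" if "0 \<le> t" for t
  proof -
    have "\<eta> * I t \<le> I ((1 + \<eta>) * t) - I t" using superlinear[OF that] by (simp add: algebra_simps)
    from mult_left_mono[OF this, of "(1 + \<eta>) / \<eta>"]
    have "(1 + \<eta>) * I t \<le> (1 + \<eta>) / \<eta> * (I ((1 + \<eta>) * t) - I t)"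
      using \<eta> by simp
    then show ?thesis
      unfolding G_def using distrib_right[of 1 \<eta> "I t"] by linarith
  qed
  then have G1: "1 \<le> G t1" using t1 \<eta> by (smt (verit) divide_le_eq mult.commute)
  have cont_scaled: "continuous_on {0..} (\<lambda>t. I ((1 + \<eta>) * t))"
    using \<eta> by (intro continuous_on_compose2[OF cont] continuous_intros) auto
  have "((\<lambda>t. (1 + \<eta>) / \<eta> * I ((1 + \<eta>) * t)) \<longlongrightarrow> 0) (at 0 within {0..})"
    using continuous_on_mult_left[OF cont_scaled, of "(1 + \<eta>) / \<eta>"] I0
    unfolding continuous_on_def by force
  then have "((\<lambda>t. (1 + \<eta>) / \<eta> * I ((1 + \<eta>) * t)) \<longlongrightarrow> 0) (at_right 0)"
    by (rule tendsto_within_subset) auto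
  then have "eventually (\<lambda>t. (1 + \<eta>) / \<eta> * I ((1 + \<eta>) * t) < 1) (at_right 0)"
    by (rule order_tendstoD) simp
  then obtain b where b: "0 < b" "\<And>t. 0 < t \<Longrightarrow> t < b \<Longrightarrow> (1 + \<eta>) / \<eta> * I ((1 + \<eta>) * t) < 1"
    unfolding eventually_at_right_field by auto
  define t0 where "t0 = min t1 (b / 2)"
  have t0: "0 < t0" "t0 \<le> t1" "t0 < b" using b t1 by (auto simp: t0_def)
  have "G t0 \<le> (1 + \<eta>) / \<eta> * I ((1 + \<eta>) * t0)"
    using nonneg[of t0] t0 \<eta> unfolding G_def by (simp add: algebra_simps)
  with b(2)[OF t0(1,3)] have G0: "G t0 \<le> 1" by simp
  have "continuous_on {t0..t1} G"
    unfolding G_def using t0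
    by (intro continuous_intros continuous_on_subset[OF cont_scaled]
        continuous_on_subset[OF cont]) auto
  from IVT'[of G t0 1 t1, OF G0 G1 t0(2) this] obtain t where "t0 \<le> t" "G t = 1"
    by blast
  with t0(1) show "\<exists>t>0. (1 + \<eta>) / \<eta> * (I ((1 + \<eta>) * t) - I t) - I t = 1"
    unfolding G_def by (intro exI[of _ t]) auto
qed

lemma integrable_compose_finite_support:
  fixes h :: "'a \<Rightarrow> real" and Q :: "real \<Rightarrow> real"
  assumes h: "h \<in> borel_measurable N" "bounded (range h)"
    and support: "emeasure N {x \<in> space N. h x \<noteq> 0} < \<infinity>"
    and Q: "continuous_on UNIV Q" "Q 0 = 0"
  shows "integrable N (\<lambda>x. Q (h x))"
proof -
  define A where "A = {x \<in> space N. h x \<noteq> 0}"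
  have "compact (Q ` closure (range h))"
    using h(2) by (intro compact_continuous_image continuous_on_subset[OF Q(1)]) auto
  then obtain B where "\<forall>y \<in> Q ` closure (range h). norm y \<le> B"
    using compact_imp_bounded bounded_iff by metis
  then have B: "\<And>z. z \<in> closure (range h) \<Longrightarrow> \<bar>Q z\<bar> \<le> B" by auto
  have "\<bar>Q (h x)\<bar> \<le> B * indicator A x" if "x \<in> space N" for x
  proof (cases "h x = 0")
    case False
    then show ?thesis
      using B[of "h x"] closure_subset[of "range h"] that by (auto simp: A_def)
  qed (simp add: Q(2) A_def)
  then have bound: "AE x in N. norm (Q (h x)) \<le> norm (B * indicator A x)"
    by (intro AE_I2) (metis abs_ge_self order_trans real_norm_def)
  have "A \<in> sets N"
    using measurable_sets[OF h(1), of "- {0}"] unfolding A_def by (simp add: vimage_def Int_def conj_commute)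
  then have majorant: "integrable N (\<lambda>x. B * indicator A x)"
    using support unfolding A_def[symmetric]
    by (intro integrable_mult_right integrable_real_indicator)
  show ?thesis
    by (rule Bochner_Integration.integrable_bound[OF majorant
          borel_measurable_continuous_on[OF Q(1) h(1)] bound])
qed

lemma borel_measurable_ennreal_compose:
  fixes Q :: "real \<Rightarrow> real"
  assumes "continuous_on UNIV Q" "h \<in> borel_measurable N"
  shows "(\<lambda>x. ennreal (Q (h x))) \<in> borel_measurable N"
  using measurable_compose[OF borel_measurable_continuous_on[OF assms] measurable_ennreal] .

lemma orlicz_norm_eq_0:
  assumes "\<And>x. x \<in> space N \<Longrightarrow> h x = 0"
  shows "orlicz_norm \<Psi> N h = 0"
proof -
  have "(\<integral>\<^sup>+x. ennreal \<bar>h x * k x\<bar> \<partial>N) = (\<integral>\<^sup>+x. 0 \<partial>N)" for k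
    by (rule nn_integral_cong) (simp add: assms)
  then show ?thesis
    unfolding orlicz_norm_def by (intro order.antisym SUP_least) auto
qed

locale complementary_N_functions =
  fixes \<Phi> \<Psi> :: "real \<Rightarrow> real"
  assumes N_function_\<Phi>: "N_function \<Phi>" and N_function_\<Psi>: "N_function \<Psi>"
    and complementary: "\<Psi> = complementary_function \<Phi>"
begin

lemma continuous_\<Phi>_scaled: "continuous_on UNIV (\<lambda>z. \<Phi> (t * \<bar>z\<bar>))"
  by (intro continuous_on_compose2[OF N_function_continuous[OF N_function_\<Phi>]] continuous_intros) simp

lemma continuous_chord_slope_scaled:
  "0 < \<eta> \<Longrightarrow> continuous_on UNIV (\<lambda>z. chord_slope \<Phi> \<eta> (t * \<bar>z\<bar>))"
  by (intro continuous_on_compose2[OF continuous_chord_slope[OF N_function_\<Phi>]] continuous_intros) auto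

lemma continuous_\<Psi>_chord_slope_scaled:
  "0 < \<eta> \<Longrightarrow> continuous_on UNIV (\<lambda>z. \<Psi> (chord_slope \<Phi> \<eta> (t * \<bar>z\<bar>)))"
  by (intro continuous_on_compose2[OF N_function_continuous[OF N_function_\<Psi>]]
      continuous_chord_slope_scaled) auto

lemma orlicz_norm_le:
  assumes h: "h \<in> borel_measurable N" and t: "0 < t"
  shows "orlicz_norm \<Psi> N h \<le> ennreal (1 / t) * (1 + \<integral>\<^sup>+x. ennreal (\<Phi> (t * \<bar>h x\<bar>)) \<partial>N)"
  unfolding orlicz_norm_def
proof (rule SUP_least, clarify)
  fix k assume k: "k \<in> borel_measurable N" "(\<integral>\<^sup>+x. ennreal (\<Psi> \<bar>k x\<bar>) \<partial>N) \<le> 1"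
  have young: "ennreal \<bar>h x * k x\<bar>
      \<le> ennreal (1 / t) * (ennreal (\<Phi> (t * \<bar>h x\<bar>)) + ennreal (\<Psi> \<bar>k x\<bar>))" for x
  proof -
    have "t * \<bar>h x\<bar> * \<bar>\<bar>k x\<bar>\<bar> \<le> \<Phi> (t * \<bar>h x\<bar>) + \<Psi> \<bar>k x\<bar>"
      unfolding complementary using t by (intro young_inequality[OF N_function_\<Phi>]) simp
    then have "\<bar>h x * k x\<bar> \<le> 1 / t * (\<Phi> (t * \<bar>h x\<bar>) + \<Psi> \<bar>k x\<bar>)"
      using t by (simp add: abs_mult field_simps)
    then have "ennreal \<bar>h x * k x\<bar> \<le> ennreal (1 / t * (\<Phi> (t * \<bar>h x\<bar>) + \<Psi> \<bar>k x\<bar>))"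
      by (rule ennreal_leI)
    also have "\<dots> = ennreal (1 / t) * ennreal (\<Phi> (t * \<bar>h x\<bar>) + \<Psi> \<bar>k x\<bar>)"
      using t N_function_nonneg[OF N_function_\<Phi>] N_function_nonneg[OF N_function_\<Psi>]
      by (intro ennreal_mult) auto
    also have "\<dots> = ennreal (1 / t) * (ennreal (\<Phi> (t * \<bar>h x\<bar>)) + ennreal (\<Psi> \<bar>k x\<bar>))"
      using N_function_nonneg[OF N_function_\<Phi>] N_function_nonneg[OF N_function_\<Psi>] by simp
    finally show ?thesis .
  qed
  have meas: "(\<lambda>x. ennreal (\<Phi> (t * \<bar>h x\<bar>))) \<in> borel_measurable N"
    "(\<lambda>x. ennreal (\<Psi> \<bar>k x\<bar>)) \<in> borel_measurable N"
    by (intro borel_measurable_ennreal_compose h k continuous_intros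
        continuous_on_compose2[OF N_function_continuous[OF N_function_\<Phi>]]
        continuous_on_compose2[OF N_function_continuous[OF N_function_\<Psi>]]; simp)+
  have "(\<integral>\<^sup>+x. ennreal \<bar>h x * k x\<bar> \<partial>N)
      \<le> (\<integral>\<^sup>+x. ennreal (1 / t) * (ennreal (\<Phi> (t * \<bar>h x\<bar>)) + ennreal (\<Psi> \<bar>k x\<bar>)) \<partial>N)"
    by (rule nn_integral_mono) (rule young)
  also have "\<dots> = ennreal (1 / t) *
      ((\<integral>\<^sup>+x. ennreal (\<Phi> (t * \<bar>h x\<bar>)) \<partial>N) + (\<integral>\<^sup>+x. ennreal (\<Psi> \<bar>k x\<bar>) \<partial>N))"
    using meas by (simp add: nn_integral_cmult nn_integral_add)
  also have "\<dots> \<le> ennreal (1 / t) * (1 + \<integral>\<^sup>+x. ennreal (\<Phi> (t * \<bar>h x\<bar>)) \<partial>N)"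
    using k(2) by (intro mult_left_mono) (auto simp: add.commute add_left_mono)
  finally show "(\<integral>\<^sup>+x. ennreal \<bar>h x * k x\<bar> \<partial>N)
      \<le> ennreal (1 / t) * (1 + \<integral>\<^sup>+x. ennreal (\<Phi> (t * \<bar>h x\<bar>)) \<partial>N)" .
qed

lemma orlicz_norm_ge:
  assumes h: "h \<in> borel_measurable N" and k: "k \<in> borel_measurable N" and c: "1 \<le> c"
    and modular: "(\<integral>\<^sup>+x. ennreal (\<Psi> \<bar>k x\<bar>) \<partial>N) \<le> ennreal c"
  shows "ennreal (1 / c) * (\<integral>\<^sup>+x. ennreal \<bar>h x * k x\<bar> \<partial>N) \<le> orlicz_norm \<Psi> N h"
proof -
  have scale: "ennreal (\<Psi> \<bar>k x / c\<bar>) \<le> ennreal (1 / c) * ennreal (\<Psi> \<bar>k x\<bar>)" for x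
  proof -
    have "\<Psi> \<bar>k x / c\<bar> = \<Psi> (1 / c * \<bar>k x\<bar>)" using c by simp
    also have "\<dots> \<le> 1 / c * \<Psi> \<bar>k x\<bar>"
      using c by (intro N_function_scale[OF N_function_\<Psi>]) auto
    finally have "ennreal (\<Psi> \<bar>k x / c\<bar>) \<le> ennreal (1 / c * \<Psi> \<bar>k x\<bar>)"
      by (rule ennreal_leI)
    also have "\<dots> = ennreal (1 / c) * ennreal (\<Psi> \<bar>k x\<bar>)"
      using c N_function_nonneg[OF N_function_\<Psi>] by (intro ennreal_mult) auto
    finally show ?thesis .
  qed
  have "(\<integral>\<^sup>+x. ennreal (\<Psi> \<bar>k x / c\<bar>) \<partial>N)
      \<le> (\<integral>\<^sup>+x. ennreal (1 / c) * ennreal (\<Psi> \<bar>k x\<bar>) \<partial>N)"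
    by (rule nn_integral_mono) (rule scale)
  also have "\<dots> = ennreal (1 / c) * (\<integral>\<^sup>+x. ennreal (\<Psi> \<bar>k x\<bar>) \<partial>N)"
    by (intro nn_integral_cmult borel_measurable_ennreal_compose k continuous_intros
        continuous_on_compose2[OF N_function_continuous[OF N_function_\<Psi>]]) simp
  also have "\<dots> \<le> ennreal (1 / c) * ennreal c"
    by (intro mult_left_mono[OF modular]) simp
  also have "\<dots> = 1"
    using c by (simp add: ennreal_mult[symmetric])
  finally have "(\<lambda>x. k x / c) \<in> {k \<in> borel_measurable N. (\<integral>\<^sup>+x. ennreal (\<Psi> \<bar>k x\<bar>) \<partial>N) \<le> 1}"
    using k by auto
  then have "(\<integral>\<^sup>+x. ennreal \<bar>h x * (k x / c)\<bar> \<partial>N) \<le> orlicz_norm \<Psi> N h"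
    unfolding orlicz_norm_def by (rule SUP_upper)
  moreover have "ennreal \<bar>h x * (k x / c)\<bar> = ennreal (1 / c) * ennreal \<bar>h x * k x\<bar>" for x
    using c by (simp add: ennreal_mult[symmetric] abs_mult)
  then have "(\<integral>\<^sup>+x. ennreal \<bar>h x * (k x / c)\<bar> \<partial>N)
      = ennreal (1 / c) * (\<integral>\<^sup>+x. ennreal \<bar>h x * k x\<bar> \<partial>N)"
    using h k by (simp add: nn_integral_cmult)
  ultimately show ?thesis by simp
qed

end

text \<open>\<open>amemiya_bound t\<close> is the quantity whose infimum over \<open>t > 0\<close> is the Orlicz norm by
  Amemiya's formula; \<open>chord_test \<eta> t\<close> is the pairing of \<open>h\<close> with the chord-slope test function,
  divided by its \<open>\<Psi>\<close>-modular whenever that exceeds 1.\<close>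

locale amemiya = complementary_N_functions +
  fixes N :: "'a measure" and h :: "'a \<Rightarrow> real"
  assumes measurable_h: "h \<in> borel_measurable N" and bounded_h: "bounded (range h)"
    and finite_support: "emeasure N {x \<in> space N. h x \<noteq> 0} < \<infinity>"
begin

definition modular :: "real \<Rightarrow> real" where
  "modular t = (\<integral>x. \<Phi> (t * \<bar>h x\<bar>) \<partial>N)"

definition amemiya_bound :: "real \<Rightarrow> real" where
  "amemiya_bound t = (1 + modular t) / t"

definition chord_test :: "real \<Rightarrow> real \<Rightarrow> real" where
  "chord_test \<eta> t = (\<integral>x. \<bar>h x\<bar> * chord_slope \<Phi> \<eta> (t * \<bar>h x\<bar>) \<partial>N)
                     / max 1 (\<integral>x. \<Psi> (chord_slope \<Phi> \<eta> (t * \<bar>h x\<bar>)) \<partial>N)"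

lemma integrable_compose:
  "continuous_on UNIV (Q :: real \<Rightarrow> real) \<Longrightarrow> Q 0 = 0 \<Longrightarrow> integrable N (\<lambda>x. Q (h x))"
  by (rule integrable_compose_finite_support[OF measurable_h bounded_h finite_support])

lemma integrable_modular: "integrable N (\<lambda>x. \<Phi> (t * \<bar>h x\<bar>))"
  using integrable_compose[OF continuous_\<Phi>_scaled] N_function_zero[OF N_function_\<Phi>] by simp

lemma integrable_complementary_chord_slope:
  "0 < \<eta> \<Longrightarrow> integrable N (\<lambda>x. \<Psi> (chord_slope \<Phi> \<eta> (t * \<bar>h x\<bar>)))"
  using integrable_compose[OF continuous_\<Psi>_chord_slope_scaled] N_function_zero[OF N_function_\<Psi>]
  by (simp add: chord_slope_def)

lemma modular_nonneg: "0 \<le> modular t"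
  unfolding modular_def using N_function_nonneg[OF N_function_\<Phi>] by simp

lemma modular_zero: "modular 0 = 0"
  unfolding modular_def using N_function_zero[OF N_function_\<Phi>] by simp

lemma continuous_modular: "continuous_on UNIV modular"
proof -
  have "convex_on UNIV modular"
  proof (rule convex_onI)
    fix a x y :: real assume a: "0 < a" "a < 1"
    have "\<Phi> (((1 - a) * x + a * y) * \<bar>h z\<bar>) \<le> (1 - a) * \<Phi> (x * \<bar>h z\<bar>) + a * \<Phi> (y * \<bar>h z\<bar>)" for z
      using convex_onD[OF N_function_convex[OF N_function_\<Phi>], of a "x * \<bar>h z\<bar>" "y * \<bar>h z\<bar>"] a
      by (simp add: algebra_simps)
    then have "modular ((1 - a) * x + a * y) \<le> (\<integral>z. (1 - a) * \<Phi> (x * \<bar>h z\<bar>) + a * \<Phi> (y * \<bar>h z\<bar>) \<partial>N)"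
      unfolding modular_def
      by (intro integral_mono integrable_modular Bochner_Integration.integrable_add
          Bochner_Integration.integrable_mult_right)
    then show "modular ((1 - a) *\<^sub>R x + a *\<^sub>R y) \<le> (1 - a) * modular x + a * modular y"
      unfolding modular_def using integrable_modular by simp
  qed simp
  then show ?thesis by (intro convex_on_continuous) auto
qed

lemma modular_superlinear:
  assumes "0 < \<eta>"
  shows "(1 + \<eta>) * modular t \<le> modular ((1 + \<eta>) * t)"
proof -
  have "\<Phi> (t * \<bar>h x\<bar>) \<le> \<Phi> ((1 + \<eta>) * t * \<bar>h x\<bar>) / (1 + \<eta>)" for x
    using N_function_scale[OF N_function_\<Phi>, of "1 / (1 + \<eta>)" "(1 + \<eta>) * t * \<bar>h x\<bar>"] assms
    by simp
  then have "(1 + \<eta>) * \<Phi> (t * \<bar>h x\<bar>) \<le> \<Phi> ((1 + \<eta>) * t * \<bar>h x\<bar>)" for x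
    using assms by (simp add: le_divide_eq mult.commute)
  then show ?thesis
    unfolding modular_def by (subst integral_mult_right_zero[symmetric])
      (intro integral_mono integrable_modular integrable_mult_right; simp)
qed

lemma orlicz_norm_le_amemiya_bound:
  assumes "0 < t"
  shows "orlicz_norm \<Psi> N h \<le> ennreal (amemiya_bound t)"
proof -
  have "(\<integral>\<^sup>+x. ennreal (\<Phi> (t * \<bar>h x\<bar>)) \<partial>N) = ennreal (modular t)"
    unfolding modular_def using N_function_nonneg[OF N_function_\<Phi>]
    by (intro nn_integral_eq_integral integrable_modular) auto
  moreover have "ennreal (1 / t) * (1 + ennreal (modular t)) = ennreal (amemiya_bound t)"
  proof -
    have "1 + ennreal (modular t) = ennreal (1 + modular t)" using modular_nonneg by simp
    also have "ennreal (1 / t) * \<dots> = ennreal (1 / t * (1 + modular t))"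
      using assms modular_nonneg[of t] by (intro ennreal_mult[symmetric]) auto
    finally show ?thesis unfolding amemiya_bound_def by simp
  qed
  ultimately show ?thesis
    using orlicz_norm_le[OF measurable_h assms] by simp
qed

lemma orlicz_norm_finite: "orlicz_norm \<Psi> N h < \<infinity>"
  using orlicz_norm_le_amemiya_bound[of 1] by (simp add: le_less_trans)

lemma enn2real_orlicz_norm_le_amemiya_bound:
  "0 < t \<Longrightarrow> enn2real (orlicz_norm \<Psi> N h) \<le> amemiya_bound t"
  using orlicz_norm_le_amemiya_bound[of t] modular_nonneg
  by (intro enn2real_leI) (auto simp: amemiya_bound_def)

lemma chord_test_nonneg:
  assumes "0 < \<eta>" "0 < t"
  shows "0 \<le> chord_test \<eta> t"
  unfolding chord_test_def using chord_slope_nonneg[OF N_function_\<Phi> assms(1)] assms(2)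
  by (intro divide_nonneg_nonneg integral_nonneg_AE AE_I2) auto

lemma chord_test_le_enn2real_orlicz_norm:
  assumes \<eta>: "0 < \<eta>" and t: "0 < t"
  shows "chord_test \<eta> t \<le> enn2real (orlicz_norm \<Psi> N h)"
proof -
  define k where "k x = chord_slope \<Phi> \<eta> (t * \<bar>h x\<bar>)" for x
  define c where "c = max 1 (\<integral>x. \<Psi> (k x) \<partial>N)"
  have k_nonneg: "0 \<le> k x" for x
    unfolding k_def using chord_slope_nonneg[OF N_function_\<Phi> \<eta>] t by simp
  have k_meas: "k \<in> borel_measurable N"
    unfolding k_def by (rule borel_measurable_continuous_on[OF continuous_chord_slope_scaled[OF \<eta>] measurable_h])
  have "(\<integral>\<^sup>+x. ennreal (\<Psi> \<bar>k x\<bar>) \<partial>N) = ennreal (\<integral>x. \<Psi> (k x) \<partial>N)"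
    using integrable_complementary_chord_slope[OF \<eta>] k_nonneg N_function_nonneg[OF N_function_\<Psi>]
    unfolding k_def by (simp add: nn_integral_eq_integral)
  then have modular_k: "(\<integral>\<^sup>+x. ennreal (\<Psi> \<bar>k x\<bar>) \<partial>N) \<le> ennreal c"
    unfolding c_def by (simp add: ennreal_leI)
  have "integrable N (\<lambda>x. \<bar>h x\<bar> * k x)"
    unfolding k_def
    by (intro integrable_compose continuous_intros continuous_chord_slope_scaled[OF \<eta>]) simp
  then have "(\<integral>\<^sup>+x. ennreal \<bar>h x * k x\<bar> \<partial>N) = ennreal (\<integral>x. \<bar>h x\<bar> * k x \<partial>N)"
    using k_nonneg by (simp add: nn_integral_eq_integral abs_mult)
  moreover have "ennreal (1 / c) * ennreal (\<integral>x. \<bar>h x\<bar> * k x \<partial>N) = ennreal (chord_test \<eta> t)"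
    unfolding chord_test_def c_def k_def using k_nonneg
    by (simp add: ennreal_mult[symmetric] integral_nonneg_AE k_def)
  ultimately have "ennreal (chord_test \<eta> t) \<le> orlicz_norm \<Psi> N h"
    using orlicz_norm_ge[OF measurable_h k_meas _ modular_k] by (simp add: c_def)
  then show ?thesis
    using enn2real_mono[of "ennreal (chord_test \<eta> t)"] orlicz_norm_finite chord_test_nonneg[OF \<eta> t]
    by simp
qed

lemma integral_chord_slope:
  assumes "0 < \<eta>" "0 < t"
  shows "(\<integral>x. \<bar>h x\<bar> * chord_slope \<Phi> \<eta> (t * \<bar>h x\<bar>) \<partial>N)
           = (modular ((1 + \<eta>) * t) - modular t) / (\<eta> * t)"
proof -
  have "\<bar>h x\<bar> * chord_slope \<Phi> \<eta> (t * \<bar>h x\<bar>)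
          = (\<Phi> ((1 + \<eta>) * t * \<bar>h x\<bar>) - \<Phi> (t * \<bar>h x\<bar>)) / (\<eta> * t)" for x
  proof -
    have "t * (\<bar>h x\<bar> * chord_slope \<Phi> \<eta> (t * \<bar>h x\<bar>))
            = (\<Phi> ((1 + \<eta>) * t * \<bar>h x\<bar>) - \<Phi> (t * \<bar>h x\<bar>)) / \<eta>"
      using mult_chord_slope[of "t * \<bar>h x\<bar>" \<Phi> \<eta>] by (simp add: mult.assoc)
    then show ?thesis using assms by (simp add: field_simps)
  qed
  then show ?thesis
    unfolding modular_def by (simp add: integrable_modular)
qed

lemma integral_complementary_chord_slope_le:
  assumes \<eta>: "0 < \<eta>" and t: "0 < t"
  shows "(\<integral>x. \<Psi> (chord_slope \<Phi> \<eta> (t * \<bar>h x\<bar>)) \<partial>N)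
           \<le> (1 + \<eta>) / \<eta> * (modular ((1 + \<eta>) * t) - modular t) - modular t"
proof -
  have "\<Psi> (chord_slope \<Phi> \<eta> (t * \<bar>h x\<bar>))
          \<le> (1 + \<eta>) / \<eta> * (\<Phi> ((1 + \<eta>) * t * \<bar>h x\<bar>) - \<Phi> (t * \<bar>h x\<bar>)) - \<Phi> (t * \<bar>h x\<bar>)" for x
  proof -
    have "(1 + \<eta>) * (t * \<bar>h x\<bar>) * chord_slope \<Phi> \<eta> (t * \<bar>h x\<bar>)
            = (1 + \<eta>) / \<eta> * (\<Phi> ((1 + \<eta>) * t * \<bar>h x\<bar>) - \<Phi> (t * \<bar>h x\<bar>))"
      using mult_chord_slope[of "t * \<bar>h x\<bar>" \<Phi> \<eta>] by (simp add: mult.assoc)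
    then show ?thesis
      using complementary_chord_slope_le[OF N_function_\<Phi> \<eta>, of "t * \<bar>h x\<bar>"] t
      unfolding complementary by simp
  qed
  moreover note integrable_complementary_chord_slope[OF \<eta>]
  moreover have "integrable N (\<lambda>x. (1 + \<eta>) / \<eta> * (\<Phi> ((1 + \<eta>) * t * \<bar>h x\<bar>) - \<Phi> (t * \<bar>h x\<bar>))
      - \<Phi> (t * \<bar>h x\<bar>))"
    by (intro Bochner_Integration.integrable_diff Bochner_Integration.integrable_mult_right
        integrable_modular)
  ultimately have "(\<integral>x. \<Psi> (chord_slope \<Phi> \<eta> (t * \<bar>h x\<bar>)) \<partial>N)
      \<le> (\<integral>x. (1 + \<eta>) / \<eta> * (\<Phi> ((1 + \<eta>) * t * \<bar>h x\<bar>) - \<Phi> (t * \<bar>h x\<bar>)) - \<Phi> (t * \<bar>h x\<bar>) \<partial>N)"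
    by (intro integral_mono)
  also have "\<dots> = (1 + \<eta>) / \<eta> * (modular ((1 + \<eta>) * t) - modular t) - modular t"
    unfolding modular_def by (simp add: integrable_modular)
  finally show ?thesis .
qed

lemma amemiya_bound_le_chord_test_or_vanishing:
  assumes \<eta>: "0 < \<eta>"
  shows "(\<exists>t>0. amemiya_bound t \<le> (1 + \<eta>) * chord_test \<eta> t)
           \<or> (\<forall>e>0. \<exists>t>0. amemiya_bound t < e)"
proof -
  consider (crossing) t where "0 < t"
      "(1 + \<eta>) / \<eta> * (modular ((1 + \<eta>) * t) - modular t) - modular t = 1"
    | (bounded) "\<forall>t>0. modular t < 1 / \<eta>"
    using level_crossing_or_bounded[OF continuous_on_subset[OF continuous_modular]
        modular_zero modular_nonneg modular_superlinear[OF \<eta>] \<eta>] by auto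
  then show ?thesis
  proof cases
    case crossing
    then have "max 1 (\<integral>x. \<Psi> (chord_slope \<Phi> \<eta> (t * \<bar>h x\<bar>)) \<partial>N) = 1"
      using integral_complementary_chord_slope_le[OF \<eta>, of t] by simp
    then have "(1 + \<eta>) * chord_test \<eta> t = (1 + \<eta>) * (modular ((1 + \<eta>) * t) - modular t) / (\<eta> * t)"
      unfolding chord_test_def using integral_chord_slope[OF \<eta> crossing(1)] by simp
    also have "\<dots> = \<eta> * (1 + modular t) / (\<eta> * t)"
    proof -
      have "(1 + \<eta>) * (modular ((1 + \<eta>) * t) - modular t) = \<eta> * (1 + modular t)"
        using crossing(2) \<eta> by (simp add: field_simps)
      then show ?thesis by simp
    qed
    also have "\<dots> = amemiya_bound t"
      unfolding amemiya_bound_def using \<eta> by simp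
    finally show ?thesis using crossing(1) by auto
  next
    case bounded
    have "\<exists>t>0. amemiya_bound t < e" if e: "0 < e" for e
    proof (intro exI conjI)
      define t where "t = 2 * (1 + 1 / \<eta>) / e"
      show t: "0 < t" unfolding t_def using \<eta> e by (simp add: add_pos_pos)
      have "amemiya_bound t < (1 + 1 / \<eta>) / t"
        unfolding amemiya_bound_def using bounded t by (simp add: divide_strict_right_mono)
      also have "\<dots> < e"
        unfolding t_def using \<eta> e by (simp add: field_simps add_pos_pos)
      finally show "amemiya_bound t < e" .
    qed
    then show ?thesis by blast
  qed
qed

lemma exists_amemiya_bound_less:
  assumes e: "0 < e"
  shows "\<exists>t>0. amemiya_bound t < enn2real (orlicz_norm \<Psi> N h) + e"
proof -
  define n where "n = enn2real (orlicz_norm \<Psi> N h)"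
  define \<eta> where "\<eta> = e / (n + 1)"
  have n: "0 \<le> n" unfolding n_def by simp
  have \<eta>: "0 < \<eta>" unfolding \<eta>_def using e n by simp
  have "\<eta> * n = e * (n / (n + 1))" unfolding \<eta>_def by simp
  also have "\<dots> < e * 1" using e n by (intro mult_strict_left_mono) auto
  finally have "\<eta> * n < e" by simp
  from amemiya_bound_le_chord_test_or_vanishing[OF \<eta>] show ?thesis
  proof
    assume "\<exists>t>0. amemiya_bound t \<le> (1 + \<eta>) * chord_test \<eta> t"
    then obtain t where t: "0 < t" and bound: "amemiya_bound t \<le> (1 + \<eta>) * chord_test \<eta> t"
      by blast
    have "(1 + \<eta>) * chord_test \<eta> t \<le> (1 + \<eta>) * n"
      unfolding n_def using \<eta> t by (intro mult_left_mono chord_test_le_enn2real_orlicz_norm) auto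
    with bound have "amemiya_bound t \<le> (1 + \<eta>) * n" by linarith
    then show ?thesis
      using t \<open>\<eta> * n < e\<close> unfolding n_def by (intro exI[of _ t]) (simp add: algebra_simps)
  next
    assume "\<forall>e>0. \<exists>t>0. amemiya_bound t < e"
    then show ?thesis using e n unfolding n_def by (meson add_increasing less_le_trans order_refl)
  qed
qed

lemma exists_chord_test_greater:
  assumes e: "0 < e"
  shows "\<exists>\<eta>>0. \<exists>t>0. enn2real (orlicz_norm \<Psi> N h) - e < chord_test \<eta> t"
proof -
  define n where "n = enn2real (orlicz_norm \<Psi> N h)"
  define \<eta> where "\<eta> = e / (n + 1)"
  have n: "0 \<le> n" unfolding n_def by simp
  have \<eta>: "0 < \<eta>" unfolding \<eta>_def using e n by simp
  have "\<eta> * n = e * (n / (n + 1))" unfolding \<eta>_def by simp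
  also have "\<dots> < e * 1" using e n by (intro mult_strict_left_mono) auto
  finally have "\<eta> * n < e" by simp
  from amemiya_bound_le_chord_test_or_vanishing[OF \<eta>] show ?thesis
  proof
    assume "\<exists>t>0. amemiya_bound t \<le> (1 + \<eta>) * chord_test \<eta> t"
    then obtain t where t: "0 < t" "amemiya_bound t \<le> (1 + \<eta>) * chord_test \<eta> t" by blast
    have "n \<le> (1 + \<eta>) * chord_test \<eta> t"
      using enn2real_orlicz_norm_le_amemiya_bound[OF t(1)] t(2) unfolding n_def by simp
    moreover have "(1 + \<eta>) * (n - e) < n"
      using \<open>\<eta> * n < e\<close> mult_pos_pos[OF \<eta> e] by (simp add: algebra_simps)
    ultimately have "(1 + \<eta>) * (n - e) < (1 + \<eta>) * chord_test \<eta> t" by simp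
    then have "n - e < chord_test \<eta> t" using \<eta> by simp
    then show ?thesis using \<eta> t(1) unfolding n_def by blast
  next
    assume "\<forall>e>0. \<exists>t>0. amemiya_bound t < e"
    then obtain t where t: "0 < t" "amemiya_bound t < e" using e by blast
    then have "n - e < chord_test \<eta> t"
      using enn2real_orlicz_norm_le_amemiya_bound[OF t(1)] chord_test_nonneg[OF \<eta> t(1)]
      unfolding n_def by simp
    then show ?thesis using \<eta> t(1) unfolding n_def by blast
  qed
qed

end

section \<open>Fibres of a Haar system\<close>

lemma continuous_on_sandwich:
  fixes g :: "'a::topological_space \<Rightarrow> real"
  assumes lower: "\<And>i u. i \<in> A \<Longrightarrow> u \<in> S \<Longrightarrow> lo i u \<le> g u"
    and upper: "\<And>j u. j \<in> B \<Longrightarrow> u \<in> S \<Longrightarrow> g u \<le> up j u"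
    and continuous_lo: "\<And>i. i \<in> A \<Longrightarrow> continuous_on S (lo i)"
    and continuous_up: "\<And>j. j \<in> B \<Longrightarrow> continuous_on S (up j)"
    and lower_approx: "\<And>u e. u \<in> S \<Longrightarrow> 0 < e \<Longrightarrow> \<exists>i\<in>A. g u - e < lo i u"
    and upper_approx: "\<And>u e. u \<in> S \<Longrightarrow> 0 < e \<Longrightarrow> \<exists>j\<in>B. up j u < g u + e"
  shows "continuous_on S g"
  unfolding continuous_on_def
proof (intro ballI order_tendstoI)
  fix u a assume u: "u \<in> S"
  have in_S: "eventually (\<lambda>v. v \<in> S) (at u within S)"
    by (simp add: eventually_at_filter)
  show "eventually (\<lambda>v. a < g v) (at u within S)" if a: "a < g u"
  proof -
    obtain i where i: "i \<in> A" "a < lo i u" using lower_approx[OF u, of "g u - a"] a by auto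
    then have "eventually (\<lambda>v. a < lo i v) (at u within S)"
      using continuous_lo u unfolding continuous_on_def by (blast intro: order_tendstoD)
    with in_S show ?thesis by eventually_elim (use lower i(1) in \<open>fastforce intro: less_le_trans\<close>)
  qed
  show "eventually (\<lambda>v. g v < a) (at u within S)" if a: "g u < a"
  proof -
    obtain j where j: "j \<in> B" "up j u < a" using upper_approx[OF u, of "a - g u"] a by auto
    then have "eventually (\<lambda>v. up j v < a) (at u within S)"
      using continuous_up u unfolding continuous_on_def by (blast intro: order_tendstoD)
    with in_S show ?thesis by eventually_elim (use upper j(1) in \<open>fastforce intro: le_less_trans\<close>)
  qed
qed

lemma compact_closure_subset: "compact (closure B) \<Longrightarrow> A \<subseteq> B \<Longrightarrow> compact (closure A)"
  using closed_Int_compact[of "closure A" "closure B"] closure_mono[of A B]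
  by (simp add: Int_absorb2)

lemma Cc_compose:
  assumes "f \<in> Cc" "continuous_on UNIV Q" "Q 0 = 0"
  shows "(\<lambda>x. Q (f x)) \<in> Cc"
  using assms continuous_on_compose2[OF assms(2), of UNIV f]
  unfolding Cc_def by (auto elim!: compact_closure_subset)

lemma closed_measure_support: "closed (measure_support M)"
  unfolding closed_def open_subopen[of "- measure_support M"]
proof
  fix x assume "x \<in> - measure_support M"
  then obtain U where U: "open U" "x \<in> U" "emeasure M U = 0"
    unfolding measure_support_def by (auto simp: not_less)
  then have "U \<subseteq> - measure_support M"
    unfolding measure_support_def by auto
  with U show "\<exists>T. open T \<and> x \<in> T \<and> T \<subseteq> - measure_support M" by blast
qed

lemma measure_support_compl_null:
  fixes M :: "'a::second_countable_topology measure"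
  assumes sets: "sets M = sets borel"
  shows "- measure_support M \<in> null_sets M"
proof -
  define \<U> where "\<U> = {U. open U \<and> emeasure M U = 0}"
  have compl: "- measure_support M = \<Union>\<U>"
    unfolding \<U>_def measure_support_def by (auto simp: not_less)
  obtain \<U>' where \<U>': "\<U>' \<subseteq> \<U>" "countable \<U>'" "\<Union>\<U>' = \<Union>\<U>"
    using Lindelof[of \<U>] unfolding \<U>_def by blast
  have "(\<Union>U\<in>\<U>'. U) \<in> null_sets M"
    using \<U>'(1) sets unfolding \<U>_def
    by (intro null_sets_UN'[OF \<U>'(2)]) (auto intro: null_setsI borel_open)
  then show ?thesis using compl \<U>'(3) by simp
qed

lemma integral_restrict_measure_support:
  fixes M :: "'a::second_countable_topology measure" and F :: "'a \<Rightarrow> real"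
  assumes sets: "sets M = sets borel" and F: "F \<in> borel_measurable M"
  shows "(\<integral>x. F x \<partial>restrict_space M (measure_support M)) = (\<integral>x. F x \<partial>M)"
proof -
  have "(\<integral>x. indicator (measure_support M) x *\<^sub>R F x \<partial>M) = (\<integral>x. F x \<partial>M)"
  proof (rule integral_cong_AE)
    have "measure_support M \<in> sets M" using sets borel_closed[OF closed_measure_support] by simp
    then show "(\<lambda>x. indicator (measure_support M) x *\<^sub>R F x) \<in> borel_measurable M"
      using F by (intro borel_measurable_scaleR borel_measurable_indicator)
    show "AE x in M. indicator (measure_support M) x *\<^sub>R F x = F x"
      using AE_not_in[OF measure_support_compl_null[OF sets]] by eventually_elim simp
  qed (rule F)
  then show ?thesis
    using sets borel_closed[OF closed_measure_support] by (subst integral_restrict_space) auto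
qed

lemma amemiya_restrict_measure_support:
  assumes "complementary_N_functions \<Phi> \<Psi>" "radon_measure M" "f \<in> Cc"
  shows "amemiya \<Phi> \<Psi> (restrict_space M (measure_support M)) f"
proof -
  define C where "C = closure {x. f x \<noteq> 0}"
  have f: "continuous_on UNIV f" "compact C" using assms(3) unfolding Cc_def C_def by auto
  have sets: "sets M = sets borel" and finite: "emeasure M C < \<infinity>"
    using assms(2) f(2) unfolding radon_measure_def by auto
  have f_meas: "f \<in> borel_measurable M"
    using f(1) measurable_cong_sets[OF sets refl] by (auto intro: borel_measurable_continuous_onI)
  have "range f \<subseteq> insert 0 (f ` C)"
    unfolding C_def using closure_subset by fastforce
  moreover have "compact (f ` C)"
    by (rule compact_continuous_image[OF continuous_on_subset[OF f(1)] f(2)]) simp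
  ultimately have "bounded (range f)"
    by (metis bounded_insert bounded_subset compact_imp_bounded)
  moreover have "emeasure (restrict_space M (measure_support M))
      {x \<in> space (restrict_space M (measure_support M)). f x \<noteq> 0} \<le> emeasure M C"
    using sets sets_eq_imp_space_eq[OF sets] borel_closed[OF closed_measure_support]
      closure_subset[of "{x. f x \<noteq> 0}"]
    by (subst emeasure_restrict_space)
       (auto simp: space_restrict_space C_def intro!: emeasure_mono)
  ultimately show ?thesis
    using assms(1) finite measurable_restrict_space1[OF f_meas]
    by unfold_locales (auto simp: complementary_N_functions_def)
qed

lemma continuous_range_map:
  assumes "lc_groupoid G2 gmult ginv"
  shows "continuous_on UNIV (range_map gmult ginv)"
proof -
  have mult: "continuous_on G2 (\<lambda>p. gmult (fst p) (snd p))" and inv: "continuous_on UNIV ginv"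
    using assms unfolding lc_groupoid_def by auto
  have "(x, ginv x) \<in> G2" for x
    using assms unfolding lc_groupoid_def groupoid_def by metis
  then have "continuous_on UNIV (\<lambda>x. (\<lambda>p. gmult (fst p) (snd p)) (x, ginv x))"
    by (intro continuous_on_compose2[OF mult] continuous_on_Pair continuous_on_id inv) auto
  then show ?thesis unfolding range_map_def by simp
qed

locale orlicz_haar_fibers = complementary_N_functions +
  fixes G2 :: "('a::{t2_space, second_countable_topology} \<times> 'a) set"
    and gmult :: "'a \<Rightarrow> 'a \<Rightarrow> 'a" and ginv :: "'a \<Rightarrow> 'a"
    and lam :: "'a \<Rightarrow> 'a measure" and f :: "'a \<Rightarrow> real"
  assumes lc_groupoid: "lc_groupoid G2 gmult ginv"
    and haar: "left_haar_system G2 gmult ginv lam"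
    and f_Cc: "f \<in> Cc"
begin

definition fiber :: "'a \<Rightarrow> 'a measure" where
  "fiber u = restrict_space (lam u) (range_map gmult ginv -` {u})"

lemma amemiya_fiber:
  assumes "u \<in> unit_space gmult ginv"
  shows "amemiya \<Phi> \<Psi> (fiber u) f"
proof -
  have "radon_measure (lam u)" "measure_support (lam u) = range_map gmult ginv -` {u}"
    using haar assms unfolding left_haar_system_def by auto
  then show ?thesis
    using amemiya_restrict_measure_support[OF complementary_N_functions_axioms _ f_Cc]
    unfolding fiber_def by metis
qed

lemma continuous_on_fiber_integral:
  fixes Q :: "real \<Rightarrow> real"
  assumes "continuous_on UNIV Q" "Q 0 = 0"
  shows "continuous_on (unit_space gmult ginv) (\<lambda>u. \<integral>x. Q (f x) \<partial>fiber u)"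
proof -
  have Qf: "(\<lambda>x. Q (f x)) \<in> Cc" by (rule Cc_compose[OF f_Cc assms])
  have "(\<integral>x. Q (f x) \<partial>fiber u) = (\<integral>x. Q (f x) \<partial>lam u)" if "u \<in> unit_space gmult ginv" for u
  proof -
    have sets: "sets (lam u) = sets borel"
      and support: "measure_support (lam u) = range_map gmult ginv -` {u}"
      using haar that unfolding left_haar_system_def radon_measure_def by auto
    have "(\<lambda>x. Q (f x)) \<in> borel_measurable (lam u)"
      using Qf measurable_cong_sets[OF sets refl] unfolding Cc_def
      by (auto intro: borel_measurable_continuous_onI)
    from integral_restrict_measure_support[OF sets this] show ?thesis
      unfolding support fiber_def .
  qed
  moreover have "continuous_on (unit_space gmult ginv) (\<lambda>u. \<integral>x. Q (f x) \<partial>lam u)"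
    using haar Qf unfolding left_haar_system_def by blast
  ultimately show ?thesis
    using continuous_on_cong by force
qed

lemma continuous_on_amemiya_bound:
  assumes "0 < t"
  shows "continuous_on (unit_space gmult ginv) (\<lambda>u. amemiya.amemiya_bound \<Phi> (fiber u) f t)"
proof -
  have "continuous_on (unit_space gmult ginv) (\<lambda>u. (1 + \<integral>x. \<Phi> (t * \<bar>f x\<bar>) \<partial>fiber u) / t)"
    using assms N_function_zero[OF N_function_\<Phi>]
    by (intro continuous_intros continuous_on_fiber_integral continuous_\<Phi>_scaled) auto
  moreover have "amemiya.amemiya_bound \<Phi> (fiber u) f t = (1 + \<integral>x. \<Phi> (t * \<bar>f x\<bar>) \<partial>fiber u) / t"
    if "u \<in> unit_space gmult ginv" for u
    using amemiya.amemiya_bound_def[OF amemiya_fiber[OF that]]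
      amemiya.modular_def[OF amemiya_fiber[OF that]] by simp
  ultimately show ?thesis
    using continuous_on_cong by force
qed

lemma continuous_on_chord_test:
  assumes \<eta>: "0 < \<eta>"
  shows "continuous_on (unit_space gmult ginv) (\<lambda>u. amemiya.chord_test \<Phi> \<Psi> (fiber u) f \<eta> t)"
proof -
  have "continuous_on (unit_space gmult ginv)
      (\<lambda>u. (\<integral>x. \<bar>f x\<bar> * chord_slope \<Phi> \<eta> (t * \<bar>f x\<bar>) \<partial>fiber u)
             / max 1 (\<integral>x. \<Psi> (chord_slope \<Phi> \<eta> (t * \<bar>f x\<bar>)) \<partial>fiber u))"
    using N_function_zero[OF N_function_\<Psi>]
    by (intro continuous_on_divide continuous_on_max continuous_on_const
        continuous_on_fiber_integral continuous_intros continuous_chord_slope_scaled[OF \<eta>]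
        continuous_\<Psi>_chord_slope_scaled[OF \<eta>])
       (auto simp: chord_slope_def)
  moreover have "amemiya.chord_test \<Phi> \<Psi> (fiber u) f \<eta> t
      = (\<integral>x. \<bar>f x\<bar> * chord_slope \<Phi> \<eta> (t * \<bar>f x\<bar>) \<partial>fiber u)
          / max 1 (\<integral>x. \<Psi> (chord_slope \<Phi> \<eta> (t * \<bar>f x\<bar>)) \<partial>fiber u)"
    if "u \<in> unit_space gmult ginv" for u
    by (rule amemiya.chord_test_def[OF amemiya_fiber[OF that]])
  ultimately show ?thesis
    using continuous_on_cong by force
qed

lemma continuous_on_orlicz_norm_fiber:
  "continuous_on (unit_space gmult ginv) (\<lambda>u. enn2real (orlicz_norm \<Psi> (fiber u) f))"
proof (rule continuous_on_sandwich[where A = "{0<..} \<times> {0<..}" and B = "{0<..}"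
      and lo = "\<lambda>i u. amemiya.chord_test \<Phi> \<Psi> (fiber u) f (fst i) (snd i)"
      and up = "\<lambda>t u. amemiya.amemiya_bound \<Phi> (fiber u) f t"])
  fix u :: 'a and e :: real
  assume u: "u \<in> unit_space gmult ginv" and e: "0 < e"
  obtain \<eta> t where "0 < \<eta>" "0 < t"
      "enn2real (orlicz_norm \<Psi> (fiber u) f) - e < amemiya.chord_test \<Phi> \<Psi> (fiber u) f \<eta> t"
    using amemiya.exists_chord_test_greater[OF amemiya_fiber[OF u] e] by blast
  then show "\<exists>i\<in>{0<..} \<times> {0<..}.
      enn2real (orlicz_norm \<Psi> (fiber u) f) - e < amemiya.chord_test \<Phi> \<Psi> (fiber u) f (fst i) (snd i)"
    by force
qed (use amemiya.chord_test_le_enn2real_orlicz_norm[OF amemiya_fiber]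
      amemiya.enn2real_orlicz_norm_le_amemiya_bound[OF amemiya_fiber]
      amemiya.exists_amemiya_bound_less[OF amemiya_fiber]
    in \<open>auto simp: Bex_def intro: continuous_on_chord_test continuous_on_amemiya_bound\<close>)

lemma compact_support_orlicz_norm_fiber:
  "compact (closure {u \<in> unit_space gmult ginv. enn2real (orlicz_norm \<Psi> (fiber u) f) \<noteq> 0})"
proof (rule compact_closure_subset)
  define C where "C = closure {x. f x \<noteq> 0}"
  have "compact (range_map gmult ginv ` C)"
    using f_Cc continuous_range_map[OF lc_groupoid] unfolding C_def Cc_def
    by (auto intro: compact_continuous_image continuous_on_subset)
  then show "compact (closure (range_map gmult ginv ` C))"
    by (simp add: compact_imp_closed)
  show "{u \<in> unit_space gmult ginv. enn2real (orlicz_norm \<Psi> (fiber u) f) \<noteq> 0}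
      \<subseteq> range_map gmult ginv ` C"
  proof (clarify, rule ccontr)
    fix u assume "enn2real (orlicz_norm \<Psi> (fiber u) f) \<noteq> 0" "u \<notin> range_map gmult ginv ` C"
    moreover have "f x = 0" if "x \<in> space (fiber u)" "u \<notin> range_map gmult ginv ` C" for x
      using that closure_subset[of "{x. f x \<noteq> 0}"]
      unfolding fiber_def C_def space_restrict_space by auto
    ultimately show False by (simp add: orlicz_norm_eq_0)
  qed
qed

end

theorem theorem3p5:
  fixes G2 :: "('a::{t2_space, second_countable_topology} \<times> 'a) set"
    and gmult :: "'a \<Rightarrow> 'a \<Rightarrow> 'a" and ginv :: "'a \<Rightarrow> 'a"
    and lam :: "'a \<Rightarrow> 'a measure"
    and \<Phi> \<Psi> :: "real \<Rightarrow> real" and f :: "'a \<Rightarrow> real"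
  assumes "lc_groupoid G2 gmult ginv"
    and "left_haar_system G2 gmult ginv lam"
    and "N_function \<Phi>" and "N_function \<Psi>"
    and "\<Psi> = complementary_function \<Phi>"
    and "Delta2 (compact (UNIV :: 'a set)) \<Phi>"
    and "f \<in> Cc"
  defines "g \<equiv> \<lambda>u. enn2real (orlicz_norm \<Psi>
                   (restrict_space (lam u) (range_map gmult ginv -` {u})) f)"
  shows "(\<forall>u \<in> unit_space gmult ginv.
            orlicz_norm \<Psi> (restrict_space (lam u) (range_map gmult ginv -` {u})) f < \<infinity>)
       \<and> continuous_on (unit_space gmult ginv) g
       \<and> compact (closure {u \<in> unit_space gmult ginv. g u \<noteq> 0})"
proof -
  interpret orlicz_haar_fibers \<Phi> \<Psi> G2 gmult ginv lam f
    using assms(1-5,7) by unfold_locales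
  have g: "g = (\<lambda>u. enn2real (orlicz_norm \<Psi> (fiber u) f))"
    unfolding g_def fiber_def ..
  show ?thesis
    using amemiya.orlicz_norm_finite[OF amemiya_fiber] continuous_on_orlicz_norm_fiber
      compact_support_orlicz_norm_fiber
    unfolding g fiber_def by blast
qed

end
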